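(* Let $G=(X,\Sigma,\longrightarrow,X_0)$ and $R=(Z,\Sigma,\longrightarrow,Z_0)$ be automata and let $E$ be a $\Sigma_{ucr}$-controllability set from $G$ to $R$. Then $E^*=\bigcup_{\widetilde W\in E}\wp(\widetilde W)$ is a $\Sigma_{ucr}$-controllability set from $G$ to $R$. Moreover, for $E^*$ the sets $W'$ in clauses (a) and (b) can additionally be required to satisfy $W'\subseteq\bigcup_{(x,z)\in W}\{x':x\xrightarrow{\sigma}x'\}\times\{z':z\xrightarrow{\sigma}z'\}$; that is: for every $W\in E^*$ and $\sigma\in\Sigma_{uc}$ there is $W'\in E^*$ with $\mathit{match}_{G,R}(W,\sigma,W')$ and $W'$ contained in that set; and for every $W\in E^*$, $(x,z)\in W$, $\sigma\in\Sigma_r$ and $z'$ with $z\xrightarrow{\sigma}z'$ there exist $x'\in X$ and $W'\in E^*$ with $x\xrightarrow{\sigma}x'$, $(x',z')\in W'$, $\mathit{match}_{G,R}(W,\sigma,W')$ and $W'$ contained in that set.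
   Context: An automaton is a 4-tuple $A=(Q,\Sigma,\longrightarrow,Q_0)$ with state set $Q$, finite event set $\Sigma$, ${\longrightarrow}\subseteq Q\times\Sigma\times Q$ and $\emptyset\neq Q_0\subseteq Q$; write $q\xrightarrow{\sigma}q'$ for $(q,\sigma,q')\in{\longrightarrow}$. Events are partitioned into uncontrollable $\Sigma_{uc}$ and controllable $\Sigma_c$; $\Sigma_r\subseteq\Sigma$ is a fixed set of required events. For $W,W'\subseteq X\times Z$ and $\sigma\in\Sigma$, $\mathit{match}_{G,R}(W,\sigma,W')$ holds iff for all $(x,z)\in W$ and all $x'$ with $x\xrightarrow{\sigma}x'$ there is $z'$ with $z\xrightarrow{\sigma}z'$ and $(x',z')\in W'$. A set $E\subseteq\wp(X\times Z)$ is a $\Sigma_{ucr}$-controllability set from $G$ to $R$ if: (istate) there is $W_0\in E$ such that every $x_0\in X_0$ has some $z_0\in Z_0$ with $(x_0,z_0)\in W_0$; (a) for every $W\in E$ and $\sigma\in\Sigma_{uc}$ there is $W'\in E$ with $\mathit{match}_{G,R}(W,\sigma,W')$; (b) for every $W\in E$, $(x,z)\in W$, $\sigma\in\Sigma_r$ and $z'\in Z$ with $z\xrightarrow{\sigma}z'$, there exist $x'\in X$ and $W'\in E$ with $x\xrightarrow{\sigma}x'$, $(x',z')\in W'$ and $\mathit{match}_{G,R}(W,\sigma,W')$. *)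

theory Defs
  imports Main
begin

record ('q,'e) automaton =
  states :: "'q set"
  events :: "'e set"
  trans  :: "('q \<times> 'e \<times> 'q) set"
  init   :: "'q set"

definition is_automaton :: "('q,'e) automaton \<Rightarrow> bool" where
  "is_automaton A \<longleftrightarrow> finite (events A) \<and>
     trans A \<subseteq> states A \<times> events A \<times> states A \<and>
     init A \<noteq> {} \<and> init A \<subseteq> states A"

definition match :: "('x,'e) automaton \<Rightarrow> ('z,'e) automaton \<Rightarrow> ('x \<times> 'z) set \<Rightarrow> 'e \<Rightarrow> ('x \<times> 'z) set \<Rightarrow> bool" where
  "match G R W \<sigma> W' \<longleftrightarrow>
     (\<forall>(x,z)\<in>W. \<forall>x'. (x,\<sigma>,x') \<in> trans G \<longrightarrow> (\<exists>z'. (z,\<sigma>,z') \<in> trans R \<and> (x',z') \<in> W'))"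

definition ctrl_set :: "('x,'e) automaton \<Rightarrow> ('z,'e) automaton \<Rightarrow> 'e set \<Rightarrow> 'e set \<Rightarrow> ('x \<times> 'z) set set \<Rightarrow> bool" where
  "ctrl_set G R Sig_uc Sig_r E \<longleftrightarrow>
     E \<subseteq> Pow (states G \<times> states R) \<and>
     (\<exists>W0\<in>E. \<forall>x0\<in>init G. \<exists>z0\<in>init R. (x0,z0) \<in> W0) \<and>
     (\<forall>W\<in>E. \<forall>\<sigma>\<in>Sig_uc. \<exists>W'\<in>E. match G R W \<sigma> W') \<and>
     (\<forall>W\<in>E. \<forall>(x,z)\<in>W. \<forall>\<sigma>\<in>Sig_r. \<forall>z'\<in>states R. (z,\<sigma>,z') \<in> trans R \<longrightarrow>
        (\<exists>x'\<in>states G. \<exists>W'\<in>E. (x,\<sigma>,x') \<in> trans G \<and> (x',z') \<in> W' \<and> match G R W \<sigma> W'))"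

definition succ_pairs :: "('x,'e) automaton \<Rightarrow> ('z,'e) automaton \<Rightarrow> ('x \<times> 'z) set \<Rightarrow> 'e \<Rightarrow> ('x \<times> 'z) set" where
  "succ_pairs G R W \<sigma> = (\<Union>(x,z)\<in>W. {x'. (x,\<sigma>,x') \<in> trans G} \<times> {z'. (z,\<sigma>,z') \<in> trans R})"

end

theory Submission
  imports Defs
begin

text \<open>Every subset W of a member of E inherits the successors of that member, since
  match is antitone in its first argument. Intersecting such a successor with
  succ_pairs G R W \<sigma> keeps it a subset of a member of E and preserves the match, because
  every pair that a match has to provide is a joint successor of a pair in W.\<close>

lemma succ_pairsI:
  assumes "(x, z) \<in> W" "(x, \<sigma>, x') \<in> trans G" "(z, \<sigma>, z') \<in> trans R"
  shows "(x', z') \<in> succ_pairs G R W \<sigma>"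
  using assms unfolding succ_pairs_def by blast

lemma match_antimono:
  assumes "match G R W \<sigma> W'" "V \<subseteq> W"
  shows "match G R V \<sigma> W'"
  using assms unfolding match_def by blast

lemma match_Int_succ_pairs:
  assumes "match G R W \<sigma> W'"
  shows "match G R W \<sigma> (W' \<inter> succ_pairs G R W \<sigma>)"
  using assms unfolding match_def by (fastforce intro: succ_pairsI)

lemma ctrl_setD_uncontrollable:
  assumes "ctrl_set G R Sig_uc Sig_r E" "W \<in> E" "\<sigma> \<in> Sig_uc"
  obtains W' where "W' \<in> E" "match G R W \<sigma> W'"
proof -
  have "\<forall>W\<in>E. \<forall>\<sigma>\<in>Sig_uc. \<exists>W'\<in>E. match G R W \<sigma> W'"
    using assms(1) unfolding ctrl_set_def by (elim conjE)
  then show ?thesis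
    using assms(2,3) that by blast
qed

lemma ctrl_setD_required:
  assumes "ctrl_set G R Sig_uc Sig_r E" "W \<in> E" "(x, z) \<in> W" "\<sigma> \<in> Sig_r"
    "z' \<in> states R" "(z, \<sigma>, z') \<in> trans R"
  obtains x' W' where "x' \<in> states G" "W' \<in> E" "(x, \<sigma>, x') \<in> trans G" "(x', z') \<in> W'"
    "match G R W \<sigma> W'"
proof -
  have "\<forall>W\<in>E. \<forall>(x, z)\<in>W. \<forall>\<sigma>\<in>Sig_r. \<forall>z'\<in>states R. (z, \<sigma>, z') \<in> trans R \<longrightarrow>
      (\<exists>x'\<in>states G. \<exists>W'\<in>E. (x, \<sigma>, x') \<in> trans G \<and> (x', z') \<in> W' \<and> match G R W \<sigma> W')"
    using assms(1) unfolding ctrl_set_def by (elim conjE)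
  then have "\<exists>x'\<in>states G. \<exists>W'\<in>E. (x, \<sigma>, x') \<in> trans G \<and> (x', z') \<in> W' \<and> match G R W \<sigma> W'"
    using assms(2-6) by fastforce
  then show ?thesis
    using that by blast
qed

lemma ctrl_set_Pow_uncontrollable:
  assumes "ctrl_set G R Sig_uc Sig_r E" "W \<in> (\<Union>V\<in>E. Pow V)" "\<sigma> \<in> Sig_uc"
  shows "\<exists>W'\<in>(\<Union>V\<in>E. Pow V). match G R W \<sigma> W' \<and> W' \<subseteq> succ_pairs G R W \<sigma>"
proof -
  obtain Wt where "Wt \<in> E" "W \<subseteq> Wt"
    using assms(2) by blast
  obtain Wt' where "Wt' \<in> E" "match G R Wt \<sigma> Wt'"
    using ctrl_setD_uncontrollable[OF assms(1) \<open>Wt \<in> E\<close> assms(3)] .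
  have "match G R W \<sigma> (Wt' \<inter> succ_pairs G R W \<sigma>)"
    using match_antimono[OF \<open>match G R Wt \<sigma> Wt'\<close> \<open>W \<subseteq> Wt\<close>] by (rule match_Int_succ_pairs)
  moreover have "Wt' \<inter> succ_pairs G R W \<sigma> \<in> (\<Union>V\<in>E. Pow V)"
    using \<open>Wt' \<in> E\<close> by blast
  ultimately show ?thesis
    by blast
qed

lemma ctrl_set_Pow_required:
  assumes "ctrl_set G R Sig_uc Sig_r E" "W \<in> (\<Union>V\<in>E. Pow V)" "(x, z) \<in> W" "\<sigma> \<in> Sig_r"
    "z' \<in> states R" "(z, \<sigma>, z') \<in> trans R"
  shows "\<exists>x'\<in>states G. \<exists>W'\<in>(\<Union>V\<in>E. Pow V). (x, \<sigma>, x') \<in> trans G \<and> (x', z') \<in> W' \<and>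
    match G R W \<sigma> W' \<and> W' \<subseteq> succ_pairs G R W \<sigma>"
proof -
  obtain Wt where "Wt \<in> E" "W \<subseteq> Wt"
    using assms(2) by blast
  obtain x' Wt' where "x' \<in> states G" "Wt' \<in> E" "(x, \<sigma>, x') \<in> trans G" "(x', z') \<in> Wt'"
      "match G R Wt \<sigma> Wt'"
    using ctrl_setD_required[OF assms(1) \<open>Wt \<in> E\<close> _ assms(4-6)] assms(3) \<open>W \<subseteq> Wt\<close> by blast
  have "match G R W \<sigma> (Wt' \<inter> succ_pairs G R W \<sigma>)"
    using match_antimono[OF \<open>match G R Wt \<sigma> Wt'\<close> \<open>W \<subseteq> Wt\<close>] by (rule match_Int_succ_pairs)
  moreover have "Wt' \<inter> succ_pairs G R W \<sigma> \<in> (\<Union>V\<in>E. Pow V)"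
    using \<open>Wt' \<in> E\<close> by blast
  moreover have "(x', z') \<in> Wt' \<inter> succ_pairs G R W \<sigma>"
    using \<open>(x', z') \<in> Wt'\<close> succ_pairsI[OF assms(3) \<open>(x, \<sigma>, x') \<in> trans G\<close> assms(6)] by blast
  ultimately show ?thesis
    using \<open>x' \<in> states G\<close> \<open>(x, \<sigma>, x') \<in> trans G\<close> by blast
qed

lemma ctrl_set_Pow:
  assumes "ctrl_set G R Sig_uc Sig_r E"
  shows "ctrl_set G R Sig_uc Sig_r (\<Union>V\<in>E. Pow V)"
  unfolding ctrl_set_def
proof (intro conjI)
  have "E \<subseteq> Pow (states G \<times> states R)"
    using assms unfolding ctrl_set_def by (elim conjE)
  then show "(\<Union>V\<in>E. Pow V) \<subseteq> Pow (states G \<times> states R)"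
    by blast
  have "\<exists>W0\<in>E. \<forall>x0\<in>init G. \<exists>z0\<in>init R. (x0, z0) \<in> W0"
    using assms unfolding ctrl_set_def by (elim conjE)
  then show "\<exists>W0\<in>(\<Union>V\<in>E. Pow V). \<forall>x0\<in>init G. \<exists>z0\<in>init R. (x0, z0) \<in> W0"
    by blast
  show "\<forall>W\<in>(\<Union>V\<in>E. Pow V). \<forall>\<sigma>\<in>Sig_uc. \<exists>W'\<in>(\<Union>V\<in>E. Pow V). match G R W \<sigma> W'"
    using ctrl_set_Pow_uncontrollable[OF assms] by (intro ballI) meson
  show "\<forall>W\<in>(\<Union>V\<in>E. Pow V). \<forall>(x, z)\<in>W. \<forall>\<sigma>\<in>Sig_r. \<forall>z'\<in>states R. (z, \<sigma>, z') \<in> trans R \<longrightarrow>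
      (\<exists>x'\<in>states G. \<exists>W'\<in>(\<Union>V\<in>E. Pow V). (x, \<sigma>, x') \<in> trans G \<and> (x', z') \<in> W' \<and>
        match G R W \<sigma> W')"
    using ctrl_set_Pow_required[OF assms] by (intro ballI case_prodI2 impI) (simp, meson)
qed

theorem lemma1:
  fixes G :: "('x,'e) automaton" and R :: "('z,'e) automaton"
    and Sig_uc Sig_c Sig_r :: "'e set" and E :: "('x \<times> 'z) set set"
  assumes "is_automaton G" and "is_automaton R" and "events R = events G"
    and "Sig_uc \<union> Sig_c = events G" and "Sig_uc \<inter> Sig_c = {}" and "Sig_r \<subseteq> events G"
    and "ctrl_set G R Sig_uc Sig_r E"
  defines "Estar \<equiv> (\<Union>W\<in>E. Pow W)"
  shows "ctrl_set G R Sig_uc Sig_r Estar \<and>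
    (\<forall>W\<in>Estar. \<forall>\<sigma>\<in>Sig_uc. \<exists>W'\<in>Estar. match G R W \<sigma> W' \<and> W' \<subseteq> succ_pairs G R W \<sigma>) \<and>
    (\<forall>W\<in>Estar. \<forall>(x,z)\<in>W. \<forall>\<sigma>\<in>Sig_r. \<forall>z'\<in>states R. (z,\<sigma>,z') \<in> trans R \<longrightarrow>
       (\<exists>x'\<in>states G. \<exists>W'\<in>Estar. (x,\<sigma>,x') \<in> trans G \<and> (x',z') \<in> W' \<and>
          match G R W \<sigma> W' \<and> W' \<subseteq> succ_pairs G R W \<sigma>))"
  unfolding Estar_def
proof (intro conjI)
  show "ctrl_set G R Sig_uc Sig_r (\<Union>W\<in>E. Pow W)"
    using assms(7) by (rule ctrl_set_Pow)
  show "\<forall>W\<in>(\<Union>W\<in>E. Pow W). \<forall>\<sigma>\<in>Sig_uc. \<exists>W'\<in>(\<Union>W\<in>E. Pow W).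
      match G R W \<sigma> W' \<and> W' \<subseteq> succ_pairs G R W \<sigma>"
    using ctrl_set_Pow_uncontrollable[OF assms(7)] by (intro ballI)
  show "\<forall>W\<in>(\<Union>W\<in>E. Pow W). \<forall>(x,z)\<in>W. \<forall>\<sigma>\<in>Sig_r. \<forall>z'\<in>states R. (z,\<sigma>,z') \<in> trans R \<longrightarrow>
      (\<exists>x'\<in>states G. \<exists>W'\<in>(\<Union>W\<in>E. Pow W). (x,\<sigma>,x') \<in> trans G \<and> (x',z') \<in> W' \<and>
        match G R W \<sigma> W' \<and> W' \<subseteq> succ_pairs G R W \<sigma>)"
    using ctrl_set_Pow_required[OF assms(7)] by (intro ballI case_prodI2 impI) simp
qed

end
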